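(* Consider the real ODE system $$\frac{dp}{dt}=p\,(pR(v_c)-Q(v_c)),\qquad \frac{dv_c}{dt}=-\frac{p}{4}(1+v_c^2)+\frac12(1-v_c^2),$$ with $R(v)=\frac12\left(\frac1v-v\right)$, $Q(v)=\frac12\left(\frac1v+v\right)$. Let $\lambda=1/100$, $\mu=1/5$, $p_b(v)=\frac{Q(v)+\mu}{R(v)-\lambda}$ for $0<v<\sqrt{1-2\lambda}$, and $\Omega_b=\{(v,p):0<v<\sqrt{1-2\lambda},\ p\ge p_b(v)\}$. If $(v_c(0),p(0))\in\Omega_b$, then, with $D=p(0)/(\lambda p(0)+\mu)$, for all $t>0$ in the existence interval $$p(t)>\frac{\mu De^{\mu t}}{1-\lambda De^{\mu t}},$$ and hence $p(t)\to\infty$ at some finite time $t_c$ with $0<t_c<-\frac{1}{\mu}\ln(\lambda D)$; moreover the quantities $N_2(t)^2=2\pi p(t)^2\left(\frac{1}{v_c(t)}+v_c(t)\right)$ and $N_0(t)=2|p(t)|\max\!\left(\frac{1}{v_c(t)},v_c(t)\right)$ also tend to $\infty$ as $t\to t_c^-$.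
   Context: This system is the form, with dissipation coefficient normalized to $\nu=1$, of the pole-dynamics ODEs for the generalized Constantin–Lax–Majda equation with $a=1/2$, $\sigma=1$, written in the variable $p=\omega_{-2,i}/(v_c(1-v_c^2))$. The quantities $N_2$ and $N_0$ equal the $L^2(-\pi,\pi)$ norm and the Wiener ($\ell^1$ of Fourier coefficients) norm, respectively, of the associated periodic solution $\omega(\cdot,t)$. *)

theory Defs
  imports "HOL-Analysis.Analysis"
begin

definition Rf :: "real \<Rightarrow> real" where "Rf v = (1/v - v) / 2"
definition Qf :: "real \<Rightarrow> real" where "Qf v = (1/v + v) / 2"

definition lam :: real where "lam = 1/100"
definition mu :: real where "mu = 1/5"

definition p_b :: "real \<Rightarrow> real" where "p_b v = (Qf v + mu) / (Rf v - lam)"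

definition Omega_b :: "(real \<times> real) set" where
  "Omega_b = {(v, p). 0 < v \<and> v < sqrt (1 - 2*lam) \<and> p \<ge> p_b v}"

definition is_sol :: "(real \<Rightarrow> real) \<Rightarrow> (real \<Rightarrow> real) \<Rightarrow> ereal \<Rightarrow> bool" where
  "is_sol v p b \<longleftrightarrow> 0 < b \<and>
     (\<forall>t. 0 \<le> t \<and> ereal t < b \<longrightarrow>
        v t \<noteq> 0 \<and>
        (p has_real_derivative (p t * (p t * Rf (v t) - Qf (v t))))
           (at t within {s. 0 \<le> s \<and> ereal s < b}) \<and>
        (v has_real_derivative (- p t / 4 * (1 + (v t)^2) + (1 - (v t)^2) / 2))
           (at t within {s. 0 \<le> s \<and> ereal s < b}))"

text \<open>Maximal (non-extendable) solution: [0,b) is the existence interval.\<close>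
definition is_max_sol :: "(real \<Rightarrow> real) \<Rightarrow> (real \<Rightarrow> real) \<Rightarrow> ereal \<Rightarrow> bool" where
  "is_max_sol v p b \<longleftrightarrow> is_sol v p b \<and>
     (\<forall>b' v' p'. b < b' \<and> is_sol v' p' b' \<longrightarrow>
        \<not> (\<forall>t. 0 \<le> t \<and> ereal t < b \<longrightarrow> v' t = v t \<and> p' t = p t))"

end

theory Submission
  imports Defs
begin

text \<open>The barrier function p (1 - v^2 - 2 lam v) - (1 + v^2 + 2 mu v) is nonnegative on Omega_b,
  and wherever it vanishes its derivative along the flow is a sextic in v that is positive on
  (0, 1); hence the region where p > 0 and the barrier is nonnegative is forward invariant. There
  the equation for p gives p' >= p (lam p + mu), so the Riccati quantity
  W = exp (mu t) (1/p + lam/mu) strictly decreases. This gives the lower bound for p, which becomes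
  infinite before - ln (lam D) / mu, so the existence interval is bounded. At its right end p must
  tend to infinity: otherwise v and p have limits, v cannot tend to 0 (then p' >= C / (t_c - t)
  and p would be unbounded), and a local solution through the limit point would extend the
  maximal solution. Finally N_2 and N_0 dominate p.\<close>

section \<open>Local existence for Lipschitz vector fields\<close>

text \<open>Time is clamped to [t0, t0 + d] so that the iterates are bounded continuous functions on the
  whole real line.\<close>
definition picard_step :: "('a::banach \<Rightarrow> 'a) \<Rightarrow> 'a \<Rightarrow> real \<Rightarrow> real \<Rightarrow> (real \<Rightarrow> 'a) \<Rightarrow> real \<Rightarrow> 'a" where
  "picard_step F x0 t0 d f t = x0 + integral {t0..max t0 (min (t0 + d) t)} (\<lambda>s. F (f s))"

lemma picard_step_eq: "t \<in> {t0..t0+d} \<Longrightarrow> picard_step F x0 t0 d f t = x0 + integral {t0..t} (\<lambda>s. F (f s))"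
  by (simp add: picard_step_def)

context
  fixes F :: "'a::banach \<Rightarrow> 'a" and f :: "real \<Rightarrow> 'a" and x0 :: 'a and r :: real
  assumes F_cont: "continuous_on (cball x0 r) F"
    and f_cont: "continuous_on UNIV f" and f_ball: "\<And>t. f t \<in> cball x0 r"
begin

lemma continuous_on_F_comp: "continuous_on A (\<lambda>s. F (f s))"
  by (rule continuous_on_compose2[OF F_cont continuous_on_subset[OF f_cont]]) (auto intro: f_ball)

lemma picard_step_in_ball:
  assumes "\<And>x. x \<in> cball x0 r \<Longrightarrow> norm (F x) \<le> M" "0 < d" "d * M \<le> r"
  shows "picard_step F x0 t0 d f t \<in> cball x0 r"
proof -
  define c where "c = max t0 (min (t0 + d) t)"
  have c: "t0 \<le> c" "c \<le> t0 + d" using assms(2) by (auto simp: c_def)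
  have M: "0 \<le> M" using assms(1)[OF f_ball] norm_ge_zero order_trans by blast
  have "norm (integral {t0..c} (\<lambda>s. F (f s))) \<le> M * (c - t0)"
    using c assms(1) f_ball by (intro integral_bound continuous_on_F_comp) auto
  also have "\<dots> \<le> M * d" using c M by (intro mult_left_mono) auto
  also have "\<dots> \<le> r" using assms(3) by (simp add: mult.commute)
  finally show ?thesis unfolding picard_step_def c_def[symmetric] by (simp add: dist_norm)
qed

lemma continuous_on_picard_step: "continuous_on UNIV (picard_step F x0 t0 d f)"
proof -
  have "continuous_on {t0..max t0 (t0 + d)} (\<lambda>u. integral {t0..u} (\<lambda>s. F (f s)))"
    by (intro indefinite_integral_continuous_1 integrable_continuous_interval continuous_on_F_comp)
  moreover have "continuous_on UNIV (\<lambda>t. max t0 (min (t0 + d) t))" by (intro continuous_intros)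
  ultimately have "continuous_on UNIV (\<lambda>t. integral {t0..max t0 (min (t0 + d) t)} (\<lambda>s. F (f s)))"
    by (rule continuous_on_compose2) auto
  then show ?thesis unfolding picard_step_def by (intro continuous_intros)
qed

end

lemma picard_step_contraction:
  fixes F :: "'a::banach \<Rightarrow> 'a"
  assumes F_lip: "K-lipschitz_on (cball x0 r) F" and d: "0 < d" "d * K \<le> 1/2"
    and f: "continuous_on UNIV f" "\<And>t. f t \<in> cball x0 r"
    and g: "continuous_on UNIV g" "\<And>t. g t \<in> cball x0 r"
    and fg: "\<And>s. norm (f s - g s) \<le> e"
  shows "norm (picard_step F x0 t0 d f t - picard_step F x0 t0 d g t) \<le> e / 2"
proof -
  note F_cont = lipschitz_on_continuous_on[OF F_lip]
  define c where "c = max t0 (min (t0 + d) t)"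
  have c: "t0 \<le> c" "c \<le> t0 + d" using d by (auto simp: c_def)
  have K: "0 \<le> K" using lipschitz_on_nonneg[OF F_lip] .
  have e: "0 \<le> e" using fg norm_ge_zero order_trans by blast
  have "norm (F (f s) - F (g s)) \<le> K * e" for s
  proof -
    have "norm (F (f s) - F (g s)) \<le> K * norm (f s - g s)"
      using lipschitz_onD[OF F_lip f(2) g(2)] by (simp add: dist_norm)
    also have "\<dots> \<le> K * e" using fg K by (rule mult_left_mono)
    finally show ?thesis .
  qed
  then have "norm (integral {t0..c} (\<lambda>s. F (f s) - F (g s))) \<le> K * e * (c - t0)"
    using c by (intro integral_bound continuous_intros continuous_on_F_comp[OF F_cont] f g) auto
  also have "\<dots> \<le> K * e * d" using c K e by (intro mult_left_mono) auto
  also have "\<dots> = (d * K) * e" by simp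
  also have "\<dots> \<le> 1/2 * e" using d e by (intro mult_right_mono) auto
  finally have "norm (integral {t0..c} (\<lambda>s. F (f s) - F (g s))) \<le> e / 2" by simp
  moreover have "picard_step F x0 t0 d f t - picard_step F x0 t0 d g t
      = integral {t0..c} (\<lambda>s. F (f s) - F (g s))"
    unfolding picard_step_def c_def[symmetric]
    by (subst integral_diff)
      (auto intro!: integrable_continuous_interval continuous_on_F_comp[OF F_cont] f g)
  ultimately show ?thesis by simp
qed

lemma picard_fixpoint:
  fixes F :: "'a::banach \<Rightarrow> 'a"
  assumes r: "r > 0" and F_lip: "K-lipschitz_on (cball x0 r) F"
    and F_bound: "\<And>x. x \<in> cball x0 r \<Longrightarrow> norm (F x) \<le> M"
    and d: "d > 0" "d * M \<le> r" "d * K \<le> 1/2"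
  obtains f :: "real \<Rightarrow>\<^sub>C 'a" where "\<And>t. f t \<in> cball x0 r"
    "\<And>t. t \<in> {t0..t0+d} \<Longrightarrow> f t = x0 + integral {t0..t} (\<lambda>s. F (f s))"
proof -
  note F_cont = lipschitz_on_continuous_on[OF F_lip]
  define S where "S = {f :: real \<Rightarrow>\<^sub>C 'a. \<forall>t. f t \<in> cball x0 r}"
  define T where "T f = Bcontfun (picard_step F x0 t0 d f)" for f :: "real \<Rightarrow>\<^sub>C 'a"
  have step_in_ball: "picard_step F x0 t0 d f t \<in> cball x0 r" if "f \<in> S" for f t
    using picard_step_in_ball[OF F_cont _ _ F_bound d(1,2)] that by (auto simp: S_def)
  have T_apply: "apply_bcontfun (T f) = picard_step F x0 t0 d f" if "f \<in> S" for f
  proof -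
    have "picard_step F x0 t0 d f \<in> bcontfun"
    proof (rule bcontfun_normI)
      show "continuous_on UNIV (picard_step F x0 t0 d f)"
        using continuous_on_picard_step[OF F_cont] that by (auto simp: S_def)
      show "norm (picard_step F x0 t0 d f t) \<le> norm x0 + r" for t
        using step_in_ball[OF that, of t] norm_triangle_sub[of "picard_step F x0 t0 d f t" x0]
        by (simp add: dist_norm norm_minus_commute)
    qed
    then show ?thesis by (simp add: T_def Bcontfun_inverse)
  qed
  have "S = PiC UNIV (\<lambda>_. cball x0 r)" unfolding S_def by (auto simp: mem_PiC_iff Pi_iff)
  then have "complete S" by (simp add: complete_eq_closed closed_PiC)
  moreover have "const_bcontfun x0 \<in> S" using r by (simp add: S_def const_bcontfun.rep_eq)
  moreover have "T ` S \<subseteq> S" using step_in_ball T_apply by (auto simp: S_def)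
  moreover have "dist (T f) (T g) \<le> (1/2) * dist f g" if f: "f \<in> S" and g: "g \<in> S" for f g
  proof (rule dist_bound)
    fix t
    have "norm (picard_step F x0 t0 d f t - picard_step F x0 t0 d g t) \<le> dist f g / 2"
      using f g dist_bounded[of f _ g]
      by (intro picard_step_contraction[OF F_lip d(1,3)]) (auto simp: S_def dist_norm)
    then show "dist (T f t) (T g t) \<le> (1/2) * dist f g" by (simp add: T_apply f g dist_norm)
  qed
  ultimately obtain f where f: "f \<in> S" "T f = f"
    using Banach_fix[of S "1/2" T] by auto
  show ?thesis
  proof (rule that)
    show "f t \<in> cball x0 r" for t using f(1) by (simp add: S_def)
    show "f t = x0 + integral {t0..t} (\<lambda>s. F (f s))" if "t \<in> {t0..t0+d}" for t
      using T_apply[OF f(1)] f(2) picard_step_eq[OF that] by metis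
  qed
qed

lemma lipschitz_local_existence:
  fixes F :: "'a::{banach,heine_borel} \<Rightarrow> 'a"
  assumes r: "r > 0" and F_lip: "K-lipschitz_on (cball x0 r) F"
  obtains d x where "d > 0" "x t0 = x0" "\<And>t. t \<in> {t0..t0+d} \<Longrightarrow> x t \<in> cball x0 r"
    "\<And>t. t \<in> {t0..t0+d} \<Longrightarrow> (x has_vector_derivative F (x t)) (at t within {t0..t0+d})"
proof -
  have "bounded (F ` cball x0 r)"
    by (intro compact_imp_bounded compact_continuous_image lipschitz_on_continuous_on[OF F_lip])
      simp
  then obtain M where M: "M > 0" "\<And>x. x \<in> cball x0 r \<Longrightarrow> norm (F x) \<le> M"
    by (auto simp: bounded_pos)
  have K: "K \<ge> 0" using lipschitz_on_nonneg[OF F_lip] .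
  define d where "d = min (r / M) (1 / (2 * K + 2))"
  have d: "d > 0" using r M K by (simp add: d_def)
  have "d * M \<le> r / M * M" using M by (intro mult_right_mono) (auto simp: d_def)
  then have dM: "d * M \<le> r" using M by simp
  have "d * K \<le> 1 / (2 * K + 2) * K" using K by (intro mult_right_mono) (auto simp: d_def)
  also have "\<dots> \<le> 1/2" using K by (simp add: field_simps)
  finally have dK: "d * K \<le> 1/2" .
  obtain f :: "real \<Rightarrow>\<^sub>C 'a" where f_ball: "\<And>t. f t \<in> cball x0 r"
    and f_eq: "\<And>t. t \<in> {t0..t0+d} \<Longrightarrow> f t = x0 + integral {t0..t} (\<lambda>s. F (f s))"
    using picard_fixpoint[OF r F_lip M(2) d dM dK] by blast
  have "f t0 = x0" using f_eq[of t0] d by simp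
  moreover have "(f has_vector_derivative F (f t)) (at t within {t0..t0+d})" if t: "t \<in> {t0..t0+d}" for t
  proof (rule has_vector_derivative_transform[OF t f_eq])
    have "continuous_on {t0..t0+d} (\<lambda>s. F (f s))"
      using f_ball by (intro continuous_on_compose2[OF lipschitz_on_continuous_on[OF F_lip]]) auto
    then show "((\<lambda>u. x0 + integral {t0..u} (\<lambda>s. F (f s))) has_vector_derivative F (f t)) (at t within {t0..t0+d})"
      using t by (auto intro!: derivative_eq_intros integral_has_vector_derivative)
  qed
  ultimately show ?thesis using that[of d "apply_bcontfun f"] d f_ball by blast
qed

definition bounded_lipschitz_on :: "'a::metric_space set \<Rightarrow> ('a \<Rightarrow> real) \<Rightarrow> bool" where
  "bounded_lipschitz_on S f \<longleftrightarrow> (\<exists>L. L-lipschitz_on S f) \<and> bounded (f ` S)"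

lemma bounded_lipschitz_onE:
  assumes "bounded_lipschitz_on S f"
  obtains L B where "L-lipschitz_on S f" "B > 0" "\<And>x. x \<in> S \<Longrightarrow> \<bar>f x\<bar> \<le> B"
  using assms unfolding bounded_lipschitz_on_def bounded_pos by auto

lemma bounded_lipschitz_onI:
  "L-lipschitz_on S f \<Longrightarrow> (\<And>x. x \<in> S \<Longrightarrow> \<bar>f x\<bar> \<le> B) \<Longrightarrow> bounded_lipschitz_on S f"
  unfolding bounded_lipschitz_on_def bounded_iff by auto

lemma bounded_lipschitz_on_const: "bounded_lipschitz_on S (\<lambda>x. c)"
  by (rule bounded_lipschitz_onI[OF lipschitz_on_constant, of _ _ "\<bar>c\<bar>"]) simp

lemma bounded_lipschitz_on_fst:
  fixes S :: "(real \<times> 'a::real_normed_vector) set"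
  assumes "bounded S" shows "bounded_lipschitz_on S fst"
proof -
  obtain B where "\<And>x. x \<in> S \<Longrightarrow> norm x \<le> B" using assms by (auto simp: bounded_iff)
  then have "\<bar>fst x\<bar> \<le> B" if "x \<in> S" for x
    using norm_fst_le[of "fst x" "snd x"] that by fastforce
  then show ?thesis
    by (intro bounded_lipschitz_onI[of 1] lipschitz_onI) (auto simp: dist_fst_le)
qed

lemma bounded_lipschitz_on_snd:
  fixes S :: "('a::real_normed_vector \<times> real) set"
  assumes "bounded S" shows "bounded_lipschitz_on S snd"
proof -
  obtain B where "\<And>x. x \<in> S \<Longrightarrow> norm x \<le> B" using assms by (auto simp: bounded_iff)
  then have "\<bar>snd x\<bar> \<le> B" if "x \<in> S" for x
    using norm_snd_le[of "snd x" "fst x"] that by fastforce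
  then show ?thesis
    by (intro bounded_lipschitz_onI[of 1] lipschitz_onI) (auto simp: dist_snd_le)
qed

lemma bounded_lipschitz_on_add:
  assumes "bounded_lipschitz_on S f" "bounded_lipschitz_on S g"
  shows "bounded_lipschitz_on S (\<lambda>x. f x + g x)"
proof -
  obtain L A M B where "L-lipschitz_on S f" "\<And>x. x \<in> S \<Longrightarrow> \<bar>f x\<bar> \<le> A"
    "M-lipschitz_on S g" "\<And>x. x \<in> S \<Longrightarrow> \<bar>g x\<bar> \<le> B"
    using assms by (metis bounded_lipschitz_onE)
  then show ?thesis
    by (intro bounded_lipschitz_onI[of "L + M" _ _ "A + B"] lipschitz_on_add)
       (auto intro: order_trans[OF abs_triangle_ineq] add_mono)
qed

lemma bounded_lipschitz_on_minus:
  assumes "bounded_lipschitz_on S f" shows "bounded_lipschitz_on S (\<lambda>x. - f x)"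
proof -
  obtain L B where "L-lipschitz_on S f" "\<And>x. x \<in> S \<Longrightarrow> \<bar>f x\<bar> \<le> B"
    using assms by (metis bounded_lipschitz_onE)
  then show ?thesis by (intro bounded_lipschitz_onI[of L _ _ B] lipschitz_on_minus) auto
qed

lemma bounded_lipschitz_on_diff:
  "bounded_lipschitz_on S f \<Longrightarrow> bounded_lipschitz_on S g \<Longrightarrow> bounded_lipschitz_on S (\<lambda>x. f x - g x)"
  using bounded_lipschitz_on_add[of S f "\<lambda>x. - g x"] bounded_lipschitz_on_minus[of S g] by simp

lemma bounded_lipschitz_on_mult:
  assumes "bounded_lipschitz_on S f" "bounded_lipschitz_on S g"
  shows "bounded_lipschitz_on S (\<lambda>x. f x * g x)"
proof -
  obtain L A M B where L: "L-lipschitz_on S f" and A: "A > 0" "\<And>x. x \<in> S \<Longrightarrow> \<bar>f x\<bar> \<le> A"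
    and M: "M-lipschitz_on S g" and B: "B > 0" "\<And>x. x \<in> S \<Longrightarrow> \<bar>g x\<bar> \<le> B"
    using assms by (metis bounded_lipschitz_onE)
  have "(A * M + B * L)-lipschitz_on S (\<lambda>x. f x * g x)"
  proof (rule lipschitz_onI)
    fix x y assume xy: "x \<in> S" "y \<in> S"
    have "dist (f x * g x) (f y * g y) = \<bar>f x * (g x - g y) + g y * (f x - f y)\<bar>"
      by (simp add: dist_real_def algebra_simps)
    also have "\<dots> \<le> \<bar>f x\<bar> * dist (g x) (g y) + \<bar>g y\<bar> * dist (f x) (f y)"
      by (metis abs_mult abs_triangle_ineq dist_real_def)
    also have "\<dots> \<le> A * (M * dist x y) + B * (L * dist x y)"
      using xy A B lipschitz_onD[OF L] lipschitz_onD[OF M]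
      by (intro add_mono mult_mono) auto
    finally show "dist (f x * g x) (f y * g y) \<le> (A * M + B * L) * dist x y"
      by (simp add: algebra_simps)
  next
    show "0 \<le> A * M + B * L"
      using A B lipschitz_on_nonneg[OF L] lipschitz_on_nonneg[OF M] by simp
  qed
  moreover have "\<bar>f x * g x\<bar> \<le> A * B" if "x \<in> S" for x
    unfolding abs_mult using A B that by (intro mult_mono) auto
  ultimately show ?thesis by (rule bounded_lipschitz_onI)
qed

lemma bounded_lipschitz_on_inverse:
  assumes "bounded_lipschitz_on S f" "c > 0" "\<And>x. x \<in> S \<Longrightarrow> c \<le> f x"
  shows "bounded_lipschitz_on S (\<lambda>x. 1 / f x)"
proof -
  obtain L where L: "L-lipschitz_on S f" using assms by (metis bounded_lipschitz_onE)
  have "(L / c^2)-lipschitz_on S (\<lambda>x. 1 / f x)"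
  proof (rule lipschitz_onI)
    fix x y assume xy: "x \<in> S" "y \<in> S"
    have f: "c \<le> f x" "c \<le> f y" using xy assms by auto
    have cc: "c^2 \<le> f x * f y"
      unfolding power2_eq_square using f assms(2) by (intro mult_mono) auto
    have "dist (1 / f x) (1 / f y) = dist (f x) (f y) / (f x * f y)"
      using f assms(2) by (simp add: dist_real_def field_simps abs_mult abs_minus_commute)
    also have "\<dots> \<le> (L * dist x y) / c^2"
      using cc f assms(2) lipschitz_onD[OF L xy] lipschitz_on_nonneg[OF L] by (intro frac_le) auto
    finally show "dist (1 / f x) (1 / f y) \<le> L / c^2 * dist x y" by simp
  next
    show "0 \<le> L / c^2" using lipschitz_on_nonneg[OF L] by simp
  qed
  moreover have "\<bar>1 / f x\<bar> \<le> 1 / c" if "x \<in> S" for x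
    using assms(2) assms(3)[OF that] by (simp add: divide_left_mono)
  ultimately show ?thesis by (rule bounded_lipschitz_onI)
qed

section \<open>Monotonicity and limits on intervals\<close>

lemma interval_induction:
  fixes P :: "real \<Rightarrow> bool"
  assumes down: "\<And>s t. t \<in> I \<Longrightarrow> a \<le> s \<Longrightarrow> s \<le> t \<Longrightarrow> s \<in> I"
    and ge: "\<And>t. t \<in> I \<Longrightarrow> a \<le> t"
    and start: "P a"
    and left: "\<And>t. t \<in> I \<Longrightarrow> a < t \<Longrightarrow> (\<And>s. a \<le> s \<Longrightarrow> s < t \<Longrightarrow> P s) \<Longrightarrow> P t"
    and right: "\<And>t. t \<in> I \<Longrightarrow> P t \<Longrightarrow> \<exists>e>0. \<forall>s\<in>I. t < s \<and> s < t + e \<longrightarrow> P s"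
    and t: "t \<in> I"
  shows "P t"
proof (rule ccontr)
  assume "\<not> P t"
  define B where "B = {s \<in> I. \<not> P s}"
  have tB: "t \<in> B" using t \<open>\<not> P t\<close> by (simp add: B_def)
  have bdd: "bdd_below B" using ge by (intro bdd_belowI[of _ a]) (auto simp: B_def)
  define \<tau> where "\<tau> = Inf B"
  have \<tau>_le: "\<tau> \<le> s" if "s \<in> B" for s using cInf_lower[OF that bdd] by (simp add: \<tau>_def)
  have a\<tau>: "a \<le> \<tau>" unfolding \<tau>_def using tB ge by (intro cInf_greatest) (auto simp: B_def)
  have \<tau>I: "\<tau> \<in> I" using down[OF t a\<tau> \<tau>_le[OF tB]] .
  have before: "P s" if "a \<le> s" "s < \<tau>" for s
    using that \<tau>_le[of s] down[OF \<tau>I, of s] by (force simp: B_def)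
  have "P \<tau>"
  proof (cases "\<tau> = a")
    case False
    then show ?thesis using left[OF \<tau>I _ before] a\<tau> by simp
  qed (use start in simp)
  then obtain e where e: "e > 0" "\<forall>s\<in>I. \<tau> < s \<and> s < \<tau> + e \<longrightarrow> P s"
    using right[OF \<tau>I] by blast
  have "\<tau> + e \<le> Inf B"
  proof (rule cInf_greatest)
    show "B \<noteq> {}" using tB by blast
    fix x assume x: "x \<in> B"
    then have "\<tau> \<le> x" "x \<noteq> \<tau>" "x \<in> I" "\<not> P x"
      using \<tau>_le \<open>P \<tau>\<close> by (auto simp: B_def)
    then show "\<tau> + e \<le> x" using e by force
  qed
  then show False using e by (simp add: \<tau>_def)
qed

lemma mono_bounded_has_left_limit:
  fixes f :: "real \<Rightarrow> real"
  assumes "a < c" and mono: "\<And>x y. a \<le> x \<Longrightarrow> x \<le> y \<Longrightarrow> y < c \<Longrightarrow> f x \<le> f y"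
    and bound: "\<And>x. a \<le> x \<Longrightarrow> x < c \<Longrightarrow> f x \<le> B"
  obtains L where "(f \<longlongrightarrow> L) (at_left c)"
proof
  have ne: "f ` {a..<c} \<noteq> {}" using assms(1) by auto
  have bdd: "bdd_above (f ` {a..<c})" using bound by (auto intro!: bdd_aboveI)
  show "(f \<longlongrightarrow> Sup (f ` {a..<c})) (at_left c)"
  proof (rule order_tendstoI)
    fix y assume "y < Sup (f ` {a..<c})"
    then obtain x0 where x0: "x0 \<in> {a..<c}" "y < f x0" using less_cSup_iff[OF ne bdd] by auto
    have "eventually (\<lambda>s. s \<in> {x0<..<c}) (at_left c)" using x0 by (intro eventually_at_left_real) auto
    then show "eventually (\<lambda>s. y < f s) (at_left c)"
    proof eventually_elim
      fix s assume "s \<in> {x0<..<c}"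
      then have "f x0 \<le> f s" using x0 by (intro mono) auto
      then show "y < f s" using x0 by simp
    qed
  next
    fix y assume y: "Sup (f ` {a..<c}) < y"
    have "eventually (\<lambda>s. s \<in> {a<..<c}) (at_left c)" using assms(1) by (intro eventually_at_left_real) auto
    then show "eventually (\<lambda>s. f s < y) (at_left c)"
    proof eventually_elim
      fix s assume "s \<in> {a<..<c}"
      then have "f s \<le> Sup (f ` {a..<c})" using bdd by (intro cSup_upper) auto
      then show "f s < y" using y by simp
    qed
  qed
qed

lemma deriv_ge_inverse_distance_unbounded:
  fixes f f' :: "real \<Rightarrow> real"
  assumes "a < c" "0 < C"
    and deriv: "\<And>t. a \<le> t \<Longrightarrow> t < c \<Longrightarrow> (f has_real_derivative f' t) (at t)"
    and growth: "\<And>t. a \<le> t \<Longrightarrow> t < c \<Longrightarrow> C / (c - t) \<le> f' t"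
  obtains t where "a \<le> t" "t < c" "B < f t"
proof -
  define \<psi> where "\<psi> t = f t + C * ln (c - t)" for t
  have \<psi>_mono: "\<psi> a \<le> \<psi> t" if "a \<le> t" "t < c" for t
  proof (rule DERIV_nonneg_imp_increasing_open[OF that(1)])
    fix x assume x: "a < x" "x < t"
    have "(\<psi> has_real_derivative f' x - C / (c - x)) (at x)"
      unfolding \<psi>_def using x that
      by (auto intro!: derivative_eq_intros deriv simp: field_simps)
    moreover have "0 \<le> f' x - C / (c - x)" using growth[of x] x that by simp
    ultimately show "\<exists>y. (\<psi> has_real_derivative y) (at x) \<and> 0 \<le> y" by blast
  next
    have "continuous_on {a..t} f"
      using that by (intro continuous_at_imp_continuous_on ballI DERIV_isCont[OF deriv]) auto
    then show "continuous_on {a..t} \<psi>"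
      unfolding \<psi>_def using that by (intro continuous_intros) auto
  qed
  define \<eta> where "\<eta> = min ((c - a) / 2) (exp ((\<psi> a - B) / C - 1))"
  have "\<eta> \<le> (c - a) / 2" unfolding \<eta>_def by (rule min.cobounded1)
  moreover have "0 < \<eta>" using assms(1) by (simp add: \<eta>_def)
  ultimately have \<eta>: "0 < \<eta>" "\<eta> < c - a" using assms(1) by simp_all
  have "ln \<eta> \<le> ln (exp ((\<psi> a - B) / C - 1))"
    using \<eta>(1) by (subst ln_le_cancel_iff) (auto simp: \<eta>_def)
  then have "ln \<eta> \<le> (\<psi> a - B) / C - 1" by simp
  then have "C * ln \<eta> < \<psi> a - B"
    using assms(2) by (simp add: field_simps)
  moreover have "\<psi> a \<le> f (c - \<eta>) + C * ln \<eta>" using \<psi>_mono[of "c - \<eta>"] \<eta> by (simp add: \<psi>_def)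
  ultimately show ?thesis using that[of "c - \<eta>"] \<eta> by simp
qed

lemma has_vector_derivative_fst:
  "(x has_vector_derivative D) F \<Longrightarrow> ((\<lambda>t. fst (x t)) has_real_derivative fst D) F"
  unfolding has_vector_derivative_def has_field_derivative_def
  by (erule has_derivative_eq_rhs[OF has_derivative_fst]) (simp add: fun_eq_iff)

lemma has_vector_derivative_snd:
  "(x has_vector_derivative D) F \<Longrightarrow> ((\<lambda>t. snd (x t)) has_real_derivative snd D) F"
  unfolding has_vector_derivative_def has_field_derivative_def
  by (erule has_derivative_eq_rhs[OF has_derivative_snd]) (simp add: fun_eq_iff)

lemma has_real_derivative_join_at:
  fixes f g f' :: "real \<Rightarrow> real"
  assumes c: "a < c" and d: "0 < d"
    and f_deriv: "\<And>t. a < t \<Longrightarrow> t < c \<Longrightarrow> (f has_real_derivative f' t) (at t)"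
    and f_lim: "(f \<longlongrightarrow> g c) (at_left c)" and f'_lim: "(f' \<longlongrightarrow> L) (at_left c)"
    and g_deriv: "(g has_real_derivative L) (at c within {c..c+d})"
  shows "((\<lambda>s. if s < c then f s else g s) has_real_derivative L) (at c)"
proof -
  define h where "h s = (if s < c then f s else g s)" for s
  have "((\<lambda>y. (g y - g c) / (y - c)) \<longlongrightarrow> L) (at_right c)"
    using g_deriv at_within_Icc_at_right[of c "c + d"] d by (simp add: has_field_derivative_iff)
  moreover have "eventually (\<lambda>y. (g y - g c) / (y - c) = (h y - h c) / (y - c)) (at_right c)"
    unfolding eventually_at_right_field by (intro exI[of _ "c + 1"]) (auto simp: h_def)
  ultimately have right: "((\<lambda>y. (h y - h c) / (y - c)) \<longlongrightarrow> L) (at_right c)"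
    by (rule Lim_transform_eventually)
  have "((\<lambda>y. (f y - g c) / (y - c)) \<longlongrightarrow> L) (at_left c)"
  proof (rule lhopital_left[where g="\<lambda>y. y - c" and f'=f' and g'="\<lambda>_. 1"])
    show "((\<lambda>y. f y - g c) \<longlongrightarrow> 0) (at_left c)" using f_lim by (simp add: LIM_zero)
    show "((\<lambda>y. y - c) \<longlongrightarrow> 0) (at_left c)"
      by (auto intro!: tendsto_eq_intros tendsto_ident_at)
    show "eventually (\<lambda>y. y - c \<noteq> 0) (at_left c)"
      unfolding eventually_at_left_field by (intro exI[of _ "c - 1"]) auto
    show "eventually (\<lambda>y. (1::real) \<noteq> 0) (at_left c)" by simp
    show "eventually (\<lambda>y. ((\<lambda>y. y - c) has_real_derivative 1) (at y)) (at_left c)"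
      by (intro always_eventually allI) (auto intro!: derivative_eq_intros)
    have "eventually (\<lambda>y. y \<in> {a<..<c}) (at_left c)" using c by (rule eventually_at_left_real)
    then show "eventually (\<lambda>y. ((\<lambda>y. f y - g c) has_real_derivative f' y) (at y)) (at_left c)"
      by eventually_elim (auto intro!: derivative_eq_intros f_deriv)
    show "((\<lambda>y. f' y / 1) \<longlongrightarrow> L) (at_left c)" using f'_lim by simp
  qed
  moreover have "eventually (\<lambda>y. (f y - g c) / (y - c) = (h y - h c) / (y - c)) (at_left c)"
    unfolding eventually_at_left_field by (intro exI[of _ "c - 1"]) (auto simp: h_def)
  ultimately have left: "((\<lambda>y. (h y - h c) / (y - c)) \<longlongrightarrow> L) (at_left c)"
    by (rule Lim_transform_eventually)
  have "(h has_real_derivative L) (at c)"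
    unfolding has_field_derivative_iff by (rule filterlim_split_at[OF left right])
  then show ?thesis by (simp add: h_def[abs_def])
qed

lemma has_real_derivative_glue:
  fixes f g f' g' :: "real \<Rightarrow> real"
  assumes c: "a < c" and d: "0 < d"
    and f_deriv: "\<And>t. a \<le> t \<Longrightarrow> t < c \<Longrightarrow> (f has_real_derivative f' t) (at t within {a..<c})"
    and f_lim: "(f \<longlongrightarrow> g c) (at_left c)" and f'_lim: "(f' \<longlongrightarrow> g' c) (at_left c)"
    and g_deriv: "\<And>t. t \<in> {c..c+d} \<Longrightarrow> (g has_real_derivative g' t) (at t within {c..c+d})"
    and t: "a \<le> t" "t < c + d"
  shows "((\<lambda>s. if s < c then f s else g s) has_real_derivative (if t < c then f' t else g' t))
           (at t within {a..<c+d})"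
proof (cases t c rule: linorder_cases)
  case less
  have "at t within {a..<c+d} = at t within {a..<c}"
    by (rule at_within_nhd[of t "{..<c}"]) (use less d in auto)
  then have "(f has_real_derivative f' t) (at t within {a..<c+d})" using f_deriv t less by simp
  then have "((\<lambda>s. if s < c then f s else g s) has_real_derivative f' t) (at t within {a..<c+d})"
    by (rule has_field_derivative_transform_within[where d="c - t"])
       (use less t d in \<open>auto simp: dist_real_def\<close>)
  then show ?thesis using less by simp
next
  case greater
  have "at t within {c..c+d} = at t"
    by (rule at_within_open_subset[of t "{c<..<c+d}"]) (use greater t in auto)
  then have "(g has_real_derivative g' t) (at t within {a..<c+d})"
    using g_deriv[of t] greater t by (simp add: has_field_derivative_at_within)
  then have "((\<lambda>s. if s < c then f s else g s) has_real_derivative g' t) (at t within {a..<c+d})"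
    by (rule has_field_derivative_transform_within[where d="t - c"])
       (use greater t c in \<open>auto simp: dist_real_def\<close>)
  then show ?thesis using greater by simp
next
  case equal
  have "(f has_real_derivative f' y) (at y)" if "a < y" "y < c" for y
  proof -
    have "at y within {a..<c} = at y"
      by (rule at_within_open_subset[of y "{a<..<c}"]) (use that in auto)
    then show ?thesis using f_deriv[of y] that by simp
  qed
  then have "((\<lambda>s. if s < c then f s else g s) has_real_derivative g' c) (at c)"
    using g_deriv[of c] d by (intro has_real_derivative_join_at[where g=g, OF c d _ f_lim f'_lim]) auto
  then show ?thesis using equal by (simp add: has_field_derivative_at_within)
qed

section \<open>The pole vector field\<close>

definition rhs_p :: "real \<Rightarrow> real \<Rightarrow> real" where "rhs_p v p = p * (p * Rf v - Qf v)"
definition rhs_v :: "real \<Rightarrow> real \<Rightarrow> real" where "rhs_v v p = - p / 4 * (1 + v^2) + (1 - v^2) / 2"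

definition pole_field :: "real \<times> real \<Rightarrow> real \<times> real" where
  "pole_field z = (rhs_v (fst z) (snd z), rhs_p (fst z) (snd z))"

lemma fst_ge_in_half_ball:
  assumes "z \<in> cball (v0, p0) (v0 / 2)" shows "v0 / 2 \<le> fst z"
proof -
  have "\<bar>v0 - fst z\<bar> \<le> v0 / 2"
    using dist_fst_le[of "(v0, p0)" z] assms by (simp add: dist_real_def)
  then show ?thesis using abs_ge_self[of "v0 - fst z"] by linarith
qed

lemma pole_field_lipschitz_on_ball:
  assumes v0: "0 < v0"
  obtains K where "K-lipschitz_on (cball (v0, p0) (v0 / 2)) pole_field"
proof -
  define S where "S = cball (v0, p0) (v0 / 2)"
  have S: "bounded S" by (simp add: S_def)
  have "0 < v0 / 2" using v0 by simp
  note basic = bounded_lipschitz_on_fst[OF S] bounded_lipschitz_on_snd[OF S]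
    bounded_lipschitz_on_inverse[OF bounded_lipschitz_on_fst[OF S] this fst_ge_in_half_ball[of _ v0 p0, folded S_def]]
    bounded_lipschitz_on_const
  have "bounded_lipschitz_on S (\<lambda>z. rhs_v (fst z) (snd z))"
    unfolding rhs_v_def power2_eq_square divide_inverse
    by (intro bounded_lipschitz_on_add bounded_lipschitz_on_mult bounded_lipschitz_on_diff
        bounded_lipschitz_on_minus basic)
  moreover have "bounded_lipschitz_on S (\<lambda>z. rhs_p (fst z) (snd z))"
    unfolding rhs_p_def Rf_def Qf_def divide_inverse[of _ 2]
    by (intro bounded_lipschitz_on_add bounded_lipschitz_on_mult bounded_lipschitz_on_diff basic)
  ultimately obtain L1 L2 where "L1-lipschitz_on S (\<lambda>z. rhs_v (fst z) (snd z))"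
    "L2-lipschitz_on S (\<lambda>z. rhs_p (fst z) (snd z))"
    unfolding bounded_lipschitz_on_def by blast
  then have "(sqrt (L1^2 + L2^2))-lipschitz_on S pole_field"
    unfolding pole_field_def by (rule lipschitz_on_Pair)
  then show ?thesis using that by (simp add: S_def)
qed

lemma pole_field_local_existence:
  assumes v0: "0 < v0"
  obtains d x where "0 < d" "x t0 = (v0, p0)" "\<And>t. t \<in> {t0..t0+d} \<Longrightarrow> 0 < fst (x t)"
    "\<And>t. t \<in> {t0..t0+d} \<Longrightarrow> (x has_vector_derivative pole_field (x t)) (at t within {t0..t0+d})"
proof -
  obtain K where K: "K-lipschitz_on (cball (v0, p0) (v0 / 2)) pole_field"
    using pole_field_lipschitz_on_ball[OF v0] .
  have "0 < v0 / 2" using v0 by simp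
  from lipschitz_local_existence[OF this K] obtain d x where
    d: "0 < d" and x0: "x t0 = (v0, p0)"
    and ball: "\<And>t. t \<in> {t0..t0+d} \<Longrightarrow> x t \<in> cball (v0, p0) (v0 / 2)"
    and deriv: "\<And>t. t \<in> {t0..t0+d} \<Longrightarrow> (x has_vector_derivative pole_field (x t)) (at t within {t0..t0+d})"
    by blast
  have "0 < fst (x t)" if "t \<in> {t0..t0+d}" for t
    using fst_ge_in_half_ball[OF ball[OF that]] v0 by simp
  then show ?thesis using that d x0 deriv by blast
qed

definition pb_num :: "real \<Rightarrow> real" where "pb_num v = 1 + v^2 + 2 * mu * v"
definition pb_den :: "real \<Rightarrow> real" where "pb_den v = 1 - v^2 - 2 * lam * v"

definition barrier :: "real \<Rightarrow> real \<Rightarrow> real" where "barrier v p = p * pb_den v - pb_num v"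

definition barrier_rate :: "real \<Rightarrow> real \<Rightarrow> real" where
  "barrier_rate v p = rhs_p v p * pb_den v - (2 * (v + lam) * p + 2 * (v + mu)) * rhs_v v p"

lemma p_b_eq:
  assumes "0 < v" shows "p_b v = pb_num v / pb_den v"
proof -
  have "Qf v + mu = pb_num v / (2 * v)" "Rf v - lam = pb_den v / (2 * v)"
    using assms by (simp_all add: Qf_def Rf_def pb_num_def pb_den_def field_simps power2_eq_square)
  then show ?thesis using assms by (simp add: p_b_def)
qed

lemma pb_num_pos:
  assumes "0 < v" shows "0 < pb_num v"
  using assms zero_le_power2[of v] unfolding pb_num_def mu_def by linarith

lemma pb_den_less_num:
  assumes "0 < v" shows "pb_den v < pb_num v"
  using assms zero_le_power2[of v] unfolding pb_num_def pb_den_def lam_def mu_def by linarith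

lemma rhs_p_eq_barrier: "v \<noteq> 0 \<Longrightarrow> rhs_p v p = p * (lam * p + mu + barrier v p / (2 * v))"
  unfolding rhs_p_def barrier_def Rf_def Qf_def pb_num_def pb_den_def lam_def mu_def
  by (simp add: field_simps power2_eq_square)

lemma barrier_nonneg_consequences:
  assumes v: "0 < v" and p: "0 < p" and H: "0 \<le> barrier v p"
  shows "0 < pb_den v" "v < 1" "1 < p" "0 < rhs_p v p"
proof -
  have pd: "pb_num v \<le> p * pb_den v" using H by (simp add: barrier_def)
  show d: "0 < pb_den v" using pd pb_num_pos[OF v] p by (metis order_less_le_trans zero_less_mult_pos)
  show "v < 1"
  proof (rule ccontr)
    assume "\<not> v < 1"
    then have "1 \<le> v^2" by (simp add: one_le_power)
    then show False using d v unfolding pb_den_def lam_def by simp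
  qed
  have "1 * pb_den v < p * pb_den v" using pd pb_den_less_num[OF v] by simp
  then show "1 < p" using d by (simp only: mult_less_cancel_right)
  have "0 < lam * p + mu + barrier v p / (2 * v)"
    using p H v unfolding lam_def mu_def by (simp add: add_pos_nonneg)
  then show "0 < rhs_p v p" using rhs_p_eq_barrier[of v p] v p by simp
qed

lemma Omega_b_barrier_nonneg:
  assumes "(v, p) \<in> Omega_b"
  shows "0 < v" "0 < p" "0 \<le> barrier v p"
proof -
  have v: "0 < v" "v < sqrt (1 - 2 * lam)" and pb: "p_b v \<le> p"
    using assms by (auto simp: Omega_b_def)
  show "0 < v" by (fact v(1))
  have "v^2 < (sqrt (1 - 2 * lam))^2" using v by (intro power_strict_mono) auto
  then have "v^2 < 49/50" by (simp add: lam_def)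
  moreover have "v < 1"
  proof (rule ccontr)
    assume "\<not> v < 1"
    then have "1 \<le> v^2" by (simp add: one_le_power)
    then show False using \<open>v^2 < 49/50\<close> by simp
  qed
  ultimately have d: "0 < pb_den v" unfolding pb_den_def lam_def by simp
  have "pb_num v / pb_den v \<le> p" using pb p_b_eq[OF v(1)] by simp
  then have "pb_num v \<le> p * pb_den v" using d by (simp add: field_simps)
  then show "0 \<le> barrier v p" by (simp add: barrier_def)
  show "0 < p" using \<open>pb_num v / pb_den v \<le> p\<close> pb_num_pos[OF v(1)] d
    by (meson divide_pos_pos less_le_trans)
qed

text \<open>The sextic is pb_den v ^ 2 * barrier_rate v (p_b v); expanded around v = 9/50 it is a small
  positive linear part plus a square times a positive quartic.\<close>
lemma barrier_rate_numerator_pos: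
  fixes v :: real assumes "0 < v" "v < 1"
  shows "0 < 21/200 - 437/500* v + 19583/25000* v^2 + 7399/1250* v^3 + 15413/25000* v^4 - 443/500* v^5 + 19/200* v^6"
proof -
  define r :: real where "r = 9/50"
  define S where "S = 738496943/250000000 + 2366111/390625* v + 153397/500000* v^2 - 4259/5000* v^3 + 19/200* v^4"
  have id: "21/200 - 437/500* v + 19583/25000* v^2 + 7399/1250* v^3 + 15413/25000* v^4 - 443/500* v^5 + 19/200* v^6
     = 25197987099/3125000000000 - 213097277/31250000000 * (v - r) + (v - r)^2 * S"
    unfolding S_def r_def by algebra
  have "v^3 \<le> v" using assms by (simp add: power_le_one power3_eq_cube mult_le_one mult_le_cancel_left1)
  then have "S > 0" unfolding S_def using assms zero_le_power2[of v] zero_le_power_eq[of v 4] by linarith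
  then have "(v - r)^2 * S \<ge> 0" by simp
  moreover have "25197987099/3125000000000 - 213097277/31250000000 * (v - r) > 0"
    using assms unfolding r_def by (simp add: right_diff_distrib)
  ultimately show ?thesis by (subst id) linarith
qed

lemma barrier_rate_pos_at_zero:
  assumes v: "0 < v" and p: "0 < p" and H: "barrier v p = 0"
  shows "0 < barrier_rate v p"
proof -
  have d: "0 < pb_den v" and v1: "v < 1" using barrier_nonneg_consequences[OF v p] H by auto
  have pd: "p * pb_den v = pb_num v" using H by (simp add: barrier_def)
  have rhs_p_eq: "rhs_p v p = p * (lam * p + mu)" using rhs_p_eq_barrier[of v p] v H by simp
  have "(pb_den v)^2 * barrier_rate v p = (p * pb_den v) * pb_den v * (lam * (p * pb_den v) + mu * pb_den v)
      - ((p * pb_den v) * (v + lam) + (v + mu) * pb_den v) * (2 * (1 - v^2) * pb_den v - (p * pb_den v) * (1 + v^2)) / 2"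
    unfolding barrier_rate_def rhs_p_eq rhs_v_def by algebra
  also have "\<dots> = pb_num v * pb_den v * (lam * pb_num v + mu * pb_den v)
      - (pb_num v * (v + lam) + (v + mu) * pb_den v) * (2 * (1 - v^2) * pb_den v - pb_num v * (1 + v^2)) / 2"
    unfolding pd ..
  also have "\<dots> = 21/200 - 437/500* v + 19583/25000* v^2 + 7399/1250* v^3 + 15413/25000* v^4 - 443/500* v^5 + 19/200* v^6"
    unfolding pb_num_def pb_den_def lam_def mu_def by algebra
  finally have "0 < (pb_den v)^2 * barrier_rate v p" using barrier_rate_numerator_pos[OF v v1] by simp
  then show ?thesis using d by (simp add: zero_less_mult_iff)
qed

lemma rhs_p_ge_inverse_v:
  assumes v: "0 < v" and q: "1 < q" "q \<le> p" and small: "v^2 * (q + 1) \<le> (q - 1) / 2"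
  shows "q * (q - 1) / (4 * v) \<le> rhs_p v p"
proof -
  have "(q - 1) / 2 < q + 1" using q by simp
  with small have "v^2 * (q + 1) < q + 1" by (rule le_less_trans)
  then have "v^2 < 1" using q by (simp add: mult_less_cancel_right2)
  then have "q * (1 - v^2) \<le> p * (1 - v^2)" using q by (intro mult_right_mono) auto
  then have num: "(q - 1) / 2 \<le> p * (1 - v^2) - (1 + v^2)" using small by (simp add: field_simps)
  have "rhs_p v p = p * ((p * (1 - v^2) - (1 + v^2)) / (2 * v))"
    unfolding rhs_p_def Rf_def Qf_def using v by (simp add: field_simps power2_eq_square)
  moreover have "q * ((q - 1) / 2 / (2 * v)) \<le> p * ((p * (1 - v^2) - (1 + v^2)) / (2 * v))"
    using num q v by (intro mult_mono divide_right_mono) auto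
  ultimately show ?thesis by simp
qed

lemma p_le_N2:
  fixes v p :: real assumes v: "0 < v" shows "p \<le> sqrt (2 * pi * p^2 * (1 / v + v))"
proof -
  have "2 * v \<le> v^2 + 1" using zero_le_power2[of "v - 1"] by (simp add: power2_diff)
  then have "2 \<le> 1 / v + v" using v by (simp add: field_simps power2_eq_square)
  have "(1::real) \<le> 2 * pi * 2" using pi_gt3 by simp
  also have "\<dots> \<le> 2 * pi * (1 / v + v)" using \<open>2 \<le> 1 / v + v\<close> by (intro mult_left_mono) auto
  finally have "p^2 * 1 \<le> p^2 * (2 * pi * (1 / v + v))" by (intro mult_left_mono) auto
  also have "\<dots> = 2 * pi * p^2 * (1 / v + v)" by (simp only: ac_simps)
  finally show ?thesis by (intro real_le_rsqrt) simp
qed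

lemma p_le_N0:
  fixes v p :: real assumes v: "0 < v" shows "p \<le> 2 * \<bar>p\<bar> * max (1 / v) v"
proof -
  have "1 \<le> max (1 / v) v"
  proof (cases "v \<le> 1")
    case True
    then have "1 \<le> 1 / v" using v by (simp add: field_simps)
    then show ?thesis by simp
  qed simp
  then have "\<bar>p\<bar> * 1 \<le> \<bar>p\<bar> * max (1 / v) v" by (intro mult_left_mono) auto
  then show ?thesis by linarith
qed

section \<open>Solutions starting in Omega_b\<close>

locale pole_solution =
  fixes v p :: "real \<Rightarrow> real" and b :: ereal
  assumes sol: "is_sol v p b" and init: "(v 0, p 0) \<in> Omega_b"
begin

definition I :: "real set" where "I = {s. 0 \<le> s \<and> ereal s < b}"
definition H :: "real \<Rightarrow> real" where "H t = barrier (v t) (p t)"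

lemma b_pos: "0 < b"
  using sol by (simp add: is_sol_def)

lemma zero_in_I: "0 \<in> I"
  using b_pos by (simp add: I_def zero_ereal_def)

lemma I_nonneg: "t \<in> I \<Longrightarrow> 0 \<le> t"
  by (simp add: I_def)

lemma I_downward: "t \<in> I \<Longrightarrow> 0 \<le> s \<Longrightarrow> s \<le> t \<Longrightarrow> s \<in> I"
  unfolding I_def by (auto intro: le_less_trans[of "ereal s" "ereal t" b])

lemma I_eq: assumes "b = ereal c" shows "I = {0..<c}"
  unfolding I_def using assms by auto

lemma at_within_I: "t \<in> I \<Longrightarrow> 0 < t \<Longrightarrow> at t within I = at t"
proof -
  assume t: "t \<in> I" "0 < t"
  then obtain z where z: "ereal t < ereal z" "ereal z < b" using ereal_dense2 by (force simp: I_def)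
  have "{0<..<z} \<subseteq> I" using z(2) by (auto simp: I_def intro: less_trans[of _ "ereal z"])
  then show ?thesis using t z by (intro at_within_open_subset[of t "{0<..<z}"]) auto
qed

lemma solution_derivs:
  assumes "t \<in> I"
  shows "v t \<noteq> 0" "(p has_real_derivative rhs_p (v t) (p t)) (at t within I)"
        "(v has_real_derivative rhs_v (v t) (p t)) (at t within I)"
  using sol assms unfolding is_sol_def I_def rhs_p_def rhs_v_def by auto

lemma solution_derivs_at:
  assumes "t \<in> I" "0 < t"
  shows "(p has_real_derivative rhs_p (v t) (p t)) (at t)"
        "(v has_real_derivative rhs_v (v t) (p t)) (at t)"
  using solution_derivs[OF assms(1)] at_within_I[OF assms] by auto

lemma continuous_on_v: "continuous_on I v"
  using solution_derivs(3) by (rule DERIV_continuous_on)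

lemma continuous_on_p: "continuous_on I p"
  using solution_derivs(2) by (rule DERIV_continuous_on)

lemma continuous_on_Icc_in_I: "continuous_on I f \<Longrightarrow> 0 \<le> s \<Longrightarrow> t \<in> I \<Longrightarrow> continuous_on {s..t} f"
  using I_downward by (auto intro: continuous_on_subset)

lemma v_pos: assumes "t \<in> I" shows "0 < v t"
proof (rule ccontr)
  assume "\<not> 0 < v t"
  have "continuous_on {0..t} v" using continuous_on_Icc_in_I[OF continuous_on_v _ assms] by simp
  then obtain s where "0 \<le> s" "s \<le> t" "v s = 0"
    using IVT2'[of v t 0 0] \<open>\<not> 0 < v t\<close> Omega_b_barrier_nonneg(1)[OF init] I_nonneg[OF assms] by auto
  then show False using solution_derivs(1) I_downward[OF assms] by blast
qed

lemma H_deriv: "t \<in> I \<Longrightarrow> (H has_real_derivative barrier_rate (v t) (p t)) (at t within I)"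
  unfolding H_def barrier_def pb_num_def pb_den_def barrier_rate_def
  by (rule DERIV_cong, rule derivative_eq_intros solution_derivs | simp)+ (simp add: algebra_simps)

lemma barrier_pos_right_after:
  assumes t: "t \<in> I" and pt: "0 < p t" and Ht: "0 \<le> H t"
  shows "\<exists>e>0. \<forall>s\<in>I. t < s \<and> s < t + e \<longrightarrow> 0 < p s \<and> 0 < H s"
proof -
  have "eventually (\<lambda>s. 0 < p s) (at t within I)"
    using order_tendstoD(1)[OF _ pt] solution_derivs(2)[OF t, THEN DERIV_continuous]
    by (simp add: continuous_within)
  moreover have "eventually (\<lambda>s. t < s \<longrightarrow> 0 < H s) (at t within I)"
  proof (cases "H t = 0")
    case True
    have "0 < barrier_rate (v t) (p t)"
      using barrier_rate_pos_at_zero[OF v_pos[OF t] pt] True by (simp add: H_def)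
    moreover have "((\<lambda>s. (H s - H t) / (s - t)) \<longlongrightarrow> barrier_rate (v t) (p t)) (at t within I)"
      using H_deriv[OF t] by (simp add: has_field_derivative_iff)
    ultimately have "eventually (\<lambda>s. 0 < (H s - H t) / (s - t)) (at t within I)"
      by (intro order_tendstoD(1))
    then show ?thesis by eventually_elim (use True in \<open>auto simp: zero_less_divide_iff\<close>)
  next
    case False
    then have "0 < H t" using Ht by simp
    have "(H \<longlongrightarrow> H t) (at t within I)"
      using H_deriv[OF t, THEN DERIV_continuous] by (simp add: continuous_within)
    then have "eventually (\<lambda>s. 0 < H s) (at t within I)"
      using \<open>0 < H t\<close> by (rule order_tendstoD(1))
    then show ?thesis by (rule eventually_mono) simp
  qed
  ultimately have "eventually (\<lambda>s. t < s \<longrightarrow> 0 < p s \<and> 0 < H s) (at t within I)"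
    by eventually_elim auto
  then show ?thesis unfolding eventually_at by (force simp: dist_real_def)
qed

lemma stays_in_barrier_region:
  assumes "t \<in> I"
  shows "0 < p t \<and> 0 \<le> H t"
proof (rule interval_induction[where I=I and a=0, OF I_downward I_nonneg _ _ _ assms])
  show "0 < p 0 \<and> 0 \<le> H 0"
    using Omega_b_barrier_nonneg[OF init] by (simp add: H_def)
next
  fix \<tau> assume \<tau>: "\<tau> \<in> I" "0 < \<tau>" and before: "\<And>s. 0 \<le> s \<Longrightarrow> s < \<tau> \<Longrightarrow> 0 < p s \<and> 0 \<le> H s"
  have at_left_le: "at_left \<tau> \<le> at \<tau> within I" using at_within_I[OF \<tau>] by (simp add: at_le)
  have ev: "eventually (\<lambda>s. 0 < p s \<and> 0 \<le> H s) (at_left \<tau>)"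
    using eventually_at_left_real[OF \<tau>(2)] by eventually_elim (simp add: before)
  have "(p \<longlongrightarrow> p \<tau>) (at_left \<tau>)" "(H \<longlongrightarrow> H \<tau>) (at_left \<tau>)"
    using solution_derivs(2)[OF \<tau>(1), THEN DERIV_continuous] H_deriv[OF \<tau>(1), THEN DERIV_continuous]
      tendsto_mono[OF at_left_le] by (auto simp: continuous_within)
  moreover have "eventually (\<lambda>s. 0 \<le> p s) (at_left \<tau>)" "eventually (\<lambda>s. 0 \<le> H s) (at_left \<tau>)"
    using ev by (auto elim: eventually_mono)
  ultimately have "0 \<le> p \<tau>" "0 \<le> H \<tau>" by (auto intro: tendsto_lowerbound)
  moreover have "p \<tau> \<noteq> 0"
    using \<open>0 \<le> H \<tau>\<close> pb_num_pos[OF v_pos[OF \<tau>(1)]] by (auto simp: H_def barrier_def)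
  ultimately show "0 < p \<tau> \<and> 0 \<le> H \<tau>" by simp
next
  fix \<tau> assume "\<tau> \<in> I" "0 < p \<tau> \<and> 0 \<le> H \<tau>"
  then show "\<exists>e>0. \<forall>s\<in>I. \<tau> < s \<and> s < \<tau> + e \<longrightarrow> 0 < p s \<and> 0 \<le> H s"
    using barrier_pos_right_after by (meson less_imp_le)
qed

lemma p_pos: "t \<in> I \<Longrightarrow> 0 < p t"
  using stays_in_barrier_region by blast

lemma H_nonneg: "t \<in> I \<Longrightarrow> 0 \<le> H t"
  using stays_in_barrier_region by blast

lemma v_less_1: "t \<in> I \<Longrightarrow> v t < 1"
  using barrier_nonneg_consequences(2)[OF v_pos p_pos H_nonneg[unfolded H_def]] .

lemma rhs_p_pos: "t \<in> I \<Longrightarrow> 0 < rhs_p (v t) (p t)"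
  using barrier_nonneg_consequences(4)[OF v_pos p_pos H_nonneg[unfolded H_def]] .

lemma p_mono: assumes "s \<in> I" "t \<in> I" "s \<le> t" shows "p s \<le> p t"
proof (rule DERIV_nonneg_imp_increasing_open[OF assms(3)])
  show "continuous_on {s..t} p" using continuous_on_Icc_in_I[OF continuous_on_p I_nonneg] assms by blast
  fix x assume x: "s < x" "x < t"
  then have "x \<in> I" "0 < x" using I_downward[OF assms(2), of x] I_nonneg[OF assms(1)] by auto
  then show "\<exists>y. (p has_real_derivative y) (at x) \<and> 0 \<le> y"
    using solution_derivs_at(1) rhs_p_pos less_imp_le by blast
qed

text \<open>With q = 1/p the equation for p reads q' = - (lam + mu q) - H / (2 v p).\<close>
definition W :: "real \<Rightarrow> real" where "W t = exp (mu * t) * (1 / p t + lam / mu)"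

definition D :: real where "D = p 0 / (lam * p 0 + mu)"

lemma W_deriv:
  assumes t: "t \<in> I" "0 < t"
  shows "(W has_real_derivative - exp (mu * t) * H t / (2 * v t * p t)) (at t)"
proof -
  have pt: "p t \<noteq> 0" and vt: "v t \<noteq> 0" using p_pos[OF t(1)] v_pos[OF t(1)] by auto
  have "(W has_real_derivative mu * exp (mu * t) * (1 / p t + lam / mu)
      + exp (mu * t) * (- rhs_p (v t) (p t) / (p t)^2)) (at t)"
    unfolding W_def using pt
    by (auto intro!: derivative_eq_intros solution_derivs_at(1)[OF t] simp: power2_eq_square field_simps)
  also have "mu * exp (mu * t) * (1 / p t + lam / mu) + exp (mu * t) * (- rhs_p (v t) (p t) / (p t)^2)
      = - exp (mu * t) * H t / (2 * v t * p t)"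
    unfolding rhs_p_eq_barrier[OF vt] H_def using pt vt by (simp add: field_simps power2_eq_square mu_def)
  finally show ?thesis .
qed

lemma continuous_on_W: "continuous_on I W"
  unfolding W_def using p_pos by (intro continuous_intros continuous_on_p) (metis less_irrefl)

lemma W_antimono:
  assumes "s \<in> I" "t \<in> I" "s \<le> t"
  shows "W t \<le> W s"
proof (rule DERIV_nonpos_imp_decreasing_open[OF assms(3)])
  show "continuous_on {s..t} W"
    using continuous_on_Icc_in_I[OF continuous_on_W I_nonneg] assms by blast
  fix x assume x: "s < x" "x < t"
  then have xI: "x \<in> I" "0 < x" using I_downward[OF assms(2), of x] I_nonneg[OF assms(1)] by auto
  have "- exp (mu * x) * H x / (2 * v x * p x) \<le> 0"
    using H_nonneg[OF xI(1)] v_pos[OF xI(1)] p_pos[OF xI(1)] by (simp add: divide_nonneg_pos)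
  then show "\<exists>y. (W has_real_derivative y) (at x) \<and> y \<le> 0" using W_deriv[OF xI] by blast
qed

lemma W_less_W0:
  assumes t: "t \<in> I" "0 < t"
  shows "W t < W 0"
proof -
  obtain e where e: "0 < e" and pos: "\<forall>s\<in>I. 0 < s \<and> s < e \<longrightarrow> 0 < p s \<and> 0 < H s"
    using barrier_pos_right_after[OF zero_in_I] Omega_b_barrier_nonneg[OF init] by (auto simp: H_def)
  define s where "s = min t (e / 2)"
  have s: "0 < s" "s \<le> t" "s < e" using t e by (auto simp: s_def)
  have sI: "s \<in> I" using I_downward[OF t(1)] s by simp
  have "W s < W 0"
  proof (rule DERIV_neg_imp_decreasing_open[OF s(1)])
    show "continuous_on {0..s} W"
      using continuous_on_Icc_in_I[OF continuous_on_W order_refl sI] .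
    fix x assume x: "0 < x" "x < s"
    then have xI: "x \<in> I" using I_downward[OF sI, of x] by simp
    have "0 < exp (mu * x) * H x / (2 * v x * p x)"
      using pos xI x s v_pos[OF xI] by (auto intro!: divide_pos_pos)
    then show "\<exists>y. (W has_real_derivative y) (at x) \<and> y < 0"
      using W_deriv[OF xI x(1)] by (intro exI conjI) auto
  qed
  then show ?thesis using W_antimono[OF sI t(1) s(2)] by simp
qed

lemma W_lower: "t \<in> I \<Longrightarrow> lam / mu * exp (mu * t) < W t"
  using p_pos[of t] unfolding W_def by (simp add: algebra_simps lam_def mu_def)

lemma D_pos: "0 < D"
  using p_pos[OF zero_in_I] by (simp add: D_def lam_def mu_def)

lemma W0_eq: "W 0 = 1 / (mu * D)"
  using p_pos[OF zero_in_I] by (simp add: W_def D_def field_simps lam_def mu_def)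

lemma p_lower_bound:
  assumes t: "t \<in> I" "0 < t"
  shows "mu * D * exp (mu * t) / (1 - lam * D * exp (mu * t)) < p t"
proof -
  define e where "e = exp (mu * t)"
  have e: "0 < e" by (simp add: e_def)
  have mD: "0 < mu * D" using D_pos by (simp add: mu_def)
  have "e * (1 / p t + lam / mu) < 1 / (mu * D)"
    using W_less_W0[OF t] W0_eq by (simp add: W_def e_def)
  then have "mu * D * (e * (1 / p t + lam / mu)) < 1"
    using mD by (simp add: field_simps)
  moreover have "mu * D * (e * (1 / p t + lam / mu)) = mu * D * e / p t + lam * D * e"
    by (simp add: field_simps mu_def)
  ultimately have key: "mu * D * e / p t + lam * D * e < 1" by simp
  have "0 < mu * D * e / p t" using mD e p_pos[OF t(1)] by simp
  then have "0 < 1 - lam * D * e" using key by linarith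
  moreover have "mu * D * e < (1 - lam * D * e) * p t"
    using key p_pos[OF t(1)] by (simp add: field_simps)
  ultimately show ?thesis by (simp add: e_def pos_divide_less_eq mult.commute)
qed

lemma existence_time_bound:
  obtains tc where "b = ereal tc" "0 < tc" "tc < - ln (lam * D) / mu"
proof -
  obtain t1 where t1: "0 < ereal t1" "ereal t1 < b" using ereal_dense2[OF b_pos] by blast
  then have t1I: "t1 \<in> I" "0 < t1" by (auto simp: I_def)
  have "0 < lam / mu * exp (mu * t1)" by (simp add: lam_def mu_def)
  then have W1: "0 < W t1" using W_lower[OF t1I(1)] by linarith
  define T where "T = ln (mu * W t1 / lam) / mu"
  have before_T: "t < T" if t: "t \<in> I" for t
  proof -
    have tt1: "max t t1 \<in> I" using t t1I by (simp add: max_def)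
    have "lam / mu * exp (mu * max t t1) < W t1"
      using W_lower[OF tt1] W_antimono[OF t1I(1) tt1 max.cobounded2] by simp
    then have "exp (mu * max t t1) < mu * W t1 / lam" by (simp add: field_simps lam_def mu_def)
    then have "mu * max t t1 < ln (mu * W t1 / lam)"
      using W1 by (subst ln_exp[symmetric], subst ln_less_cancel_iff) (auto simp: lam_def mu_def)
    then have "max t t1 < T" by (simp add: T_def field_simps mu_def)
    then show ?thesis by simp
  qed
  have "b \<le> ereal T"
  proof (rule ccontr)
    assume "\<not> b \<le> ereal T"
    then obtain z where "ereal T < ereal z" "ereal z < b" using ereal_dense2 by (metis not_le)
    moreover have "0 \<le> z" using calculation before_T[OF t1I(1)] t1I by simp
    ultimately show False using before_T[of z] by (simp add: I_def)
  qed
  then obtain tc where tc: "b = ereal tc" "tc \<le> T" using b_pos by (cases b) auto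
  have "mu * W t1 / lam < 1 / (lam * D)"
    using W_less_W0[OF t1I] W0_eq D_pos by (simp add: field_simps lam_def mu_def)
  then have "ln (mu * W t1 / lam) < ln (1 / (lam * D))"
    using W1 D_pos by (intro ln_less_cancel_iff[THEN iffD2]) (auto simp: lam_def mu_def)
  then have "T < - ln (lam * D) / mu" using D_pos by (simp add: T_def ln_div lam_def mu_def field_simps)
  moreover have "0 < tc" using b_pos tc(1) by (simp add: zero_ereal_def)
  ultimately show ?thesis using that tc by simp
qed

lemma rhs_v_ge:
  assumes "t \<in> I" shows "- p t / 2 \<le> rhs_v (v t) (p t)"
proof -
  have "(v t)^2 < 1" using v_pos[OF assms] v_less_1[OF assms] by (simp add: power_less_one_iff)
  then have "p t / 4 * (1 + (v t)^2) \<le> p t / 4 * 2"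
    using p_pos[OF assms] by (intro mult_left_mono) auto
  moreover have "0 \<le> (1 - (v t)^2) / 2" using \<open>(v t)^2 < 1\<close> by simp
  ultimately show ?thesis unfolding rhs_v_def by linarith
qed

lemma bounded_solution_left_limits:
  assumes tc: "b = ereal tc" and bound: "\<And>t. t \<in> I \<Longrightarrow> p t \<le> B"
  obtains K vb L where "0 < K" "(v \<longlongrightarrow> vb) (at_left tc)" "(p \<longlongrightarrow> L) (at_left tc)"
    "\<And>t. t \<in> I \<Longrightarrow> v t \<le> vb + K * (tc - t)"
proof -
  have I: "I = {0..<tc}" by (rule I_eq[OF tc])
  have tc0: "0 < tc" using zero_in_I I by simp
  obtain L where L: "(p \<longlongrightarrow> L) (at_left tc)"
    using mono_bounded_has_left_limit[OF tc0, of p B] p_mono bound by (auto simp: I)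
  define K where "K = B / 2 + 1"
  have K: "0 < K" using bound[OF zero_in_I] p_pos[OF zero_in_I] by (simp add: K_def)
  define g where "g t = v t + K * t" for t
  have g_mono: "g s \<le> g t" if "s \<in> I" "t \<in> I" "s \<le> t" for s t
  proof (rule DERIV_nonneg_imp_increasing_open[OF that(3)])
    show "continuous_on {s..t} g"
      unfolding g_def using continuous_on_Icc_in_I[OF continuous_on_v I_nonneg] that
      by (intro continuous_intros) blast
    fix x assume x: "s < x" "x < t"
    then have xI: "x \<in> I" "0 < x" using I_downward[OF that(2), of x] I_nonneg[OF that(1)] by auto
    have "0 \<le> rhs_v (v x) (p x) + K" using rhs_v_ge[OF xI(1)] bound[OF xI(1)] by (simp add: K_def)
    moreover have "(g has_real_derivative rhs_v (v x) (p x) + K) (at x)"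
      unfolding g_def using solution_derivs_at(2)[OF xI] by (auto intro!: derivative_eq_intros)
    ultimately show "\<exists>y. (g has_real_derivative y) (at x) \<and> 0 \<le> y" by blast
  qed
  have "g t \<le> 1 + K * tc" if "t \<in> I" for t
    using v_less_1[OF that] K that by (simp add: g_def I add_mono)
  then obtain Lg where Lg: "(g \<longlongrightarrow> Lg) (at_left tc)"
    using mono_bounded_has_left_limit[OF tc0, of g "1 + K * tc"] g_mono by (auto simp: I)
  have "((\<lambda>t. g t - K * t) \<longlongrightarrow> Lg - K * tc) (at_left tc)" by (intro tendsto_intros Lg)
  then have v_lim: "(v \<longlongrightarrow> Lg - K * tc) (at_left tc)" by (simp add: g_def)
  have "v t \<le> Lg - K * tc + K * (tc - t)" if t: "t \<in> I" for t
  proof -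
    have "eventually (\<lambda>s. s \<in> {t<..<tc}) (at_left tc)" using t I by (intro eventually_at_left_real) auto
    then have "eventually (\<lambda>s. g t \<le> g s) (at_left tc)"
      by eventually_elim (use t in \<open>auto intro!: g_mono simp: I\<close>)
    then have "g t \<le> Lg" using Lg by (intro tendsto_lowerbound) auto
    then show ?thesis by (simp add: g_def algebra_simps)
  qed
  then show ?thesis using that[OF K v_lim L] by blast
qed

lemma left_limit_v_nonzero:
  assumes tc: "b = ereal tc" and bound: "\<And>t. t \<in> I \<Longrightarrow> p t \<le> B" and K: "0 < K"
    and v_le: "\<And>t. t \<in> I \<Longrightarrow> v t \<le> K * (tc - t)" and v_lim: "(v \<longlongrightarrow> 0) (at_left tc)"
  shows False
proof -
  have I: "I = {0..<tc}" by (rule I_eq[OF tc])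
  define q where "q = p 0"
  have q: "1 < q"
    using barrier_nonneg_consequences(3)[OF v_pos p_pos H_nonneg[unfolded H_def]] zero_in_I
    by (simp add: q_def)
  have "((\<lambda>t. (v t)^2 * (q + 1)) \<longlongrightarrow> 0) (at_left tc)" using v_lim by (auto intro: tendsto_eq_intros)
  moreover have "0 < (q - 1) / 2" using q by simp
  ultimately have "eventually (\<lambda>t. (v t)^2 * (q + 1) < (q - 1) / 2) (at_left tc)"
    by (rule order_tendstoD(2))
  then obtain a where a: "a < tc" "\<And>t. a < t \<Longrightarrow> t < tc \<Longrightarrow> (v t)^2 * (q + 1) < (q - 1) / 2"
    unfolding eventually_at_left_field by blast
  define a' where "a' = (max a 0 + tc) / 2"
  have "0 < tc" using zero_in_I I by simp
  then have a': "0 < a'" "a < a'" "a' < tc" using a(1) unfolding a'_def by (auto simp: max_def)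
  obtain t where t: "a' \<le> t" "t < tc" "B < p t"
  proof (rule deriv_ge_inverse_distance_unbounded[OF a'(3)])
    show "0 < q * (q - 1) / (4 * K)" using q K by simp
    fix t assume t: "a' \<le> t" "t < tc"
    then have tI: "t \<in> I" "0 < t" using a' I by auto
    show "(p has_real_derivative rhs_p (v t) (p t)) (at t)" by (rule solution_derivs_at(1)[OF tI])
    have "q * (q - 1) / (4 * K * (tc - t)) \<le> q * (q - 1) / (4 * v t)"
      using q K v_pos[OF tI(1)] v_le[OF tI(1)] t(2) by (intro divide_left_mono) auto
    also have "\<dots> \<le> rhs_p (v t) (p t)"
      using q a(2)[of t] a' t p_mono[OF zero_in_I tI(1)] v_pos[OF tI(1)] I_nonneg[OF tI(1)]
      by (intro rhs_p_ge_inverse_v) (auto simp: q_def)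
    finally show "q * (q - 1) / (4 * K) / (tc - t) \<le> rhs_p (v t) (p t)" by simp
  qed
  then show False using bound[of t] a' I by auto
qed

lemma no_extension_beyond:
  assumes max: "is_max_sol v p b" and tc: "b = ereal tc" and vb: "0 < vb"
    and v_lim: "(v \<longlongrightarrow> vb) (at_left tc)" and p_lim: "(p \<longlongrightarrow> L) (at_left tc)"
  shows False
proof -
  have I: "I = {0..<tc}" by (rule I_eq[OF tc])
  have tc0: "0 < tc" using zero_in_I I by simp
  obtain d x where d: "0 < d" and x0: "x tc = (vb, L)"
    and x_pos: "\<And>t. t \<in> {tc..tc+d} \<Longrightarrow> 0 < fst (x t)"
    and x_deriv: "\<And>t. t \<in> {tc..tc+d} \<Longrightarrow> (x has_vector_derivative pole_field (x t)) (at t within {tc..tc+d})"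
    using pole_field_local_existence[OF vb, of tc L] by blast
  define v' where "v' = (\<lambda>s. if s < tc then v s else fst (x s))"
  define p' where "p' = (\<lambda>s. if s < tc then p s else snd (x s))"
  have rhs_eq: "rhs_v (v' t) (p' t) = (if t < tc then rhs_v (v t) (p t) else fst (pole_field (x t)))"
    "rhs_p (v' t) (p' t) = (if t < tc then rhs_p (v t) (p t) else snd (pole_field (x t)))" for t
    by (simp_all add: v'_def p'_def pole_field_def)
  have lims: "((\<lambda>s. rhs_v (v s) (p s)) \<longlongrightarrow> fst (pole_field (x tc))) (at_left tc)"
    "((\<lambda>s. rhs_p (v s) (p s)) \<longlongrightarrow> snd (pole_field (x tc))) (at_left tc)"
    using vb unfolding x0 pole_field_def rhs_v_def rhs_p_def Rf_def Qf_def
    by (auto intro!: tendsto_eq_intros v_lim p_lim)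
  have old: "(v has_real_derivative rhs_v (v t) (p t)) (at t within {0..<tc})"
    "(p has_real_derivative rhs_p (v t) (p t)) (at t within {0..<tc})" if "0 \<le> t" "t < tc" for t
    using solution_derivs(2,3)[of t] that I by simp_all
  have new: "((\<lambda>s. fst (x s)) has_real_derivative fst (pole_field (x t))) (at t within {tc..tc+d})"
    "((\<lambda>s. snd (x s)) has_real_derivative snd (pole_field (x t))) (at t within {tc..tc+d})"
    if "t \<in> {tc..tc+d}" for t
    using x_deriv[OF that] by (auto intro: has_vector_derivative_fst has_vector_derivative_snd)
  have "(v' has_real_derivative rhs_v (v' t) (p' t)) (at t within {0..<tc+d})"
    if "0 \<le> t" "t < tc + d" for t
    unfolding rhs_eq unfolding v'_def
    by (rule has_real_derivative_glue[OF tc0 d old(1) _ lims(1) new(1) that]) (use v_lim x0 in simp_all)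
  moreover have "(p' has_real_derivative rhs_p (v' t) (p' t)) (at t within {0..<tc+d})"
    if "0 \<le> t" "t < tc + d" for t
    unfolding rhs_eq unfolding p'_def
    by (rule has_real_derivative_glue[OF tc0 d old(2) _ lims(2) new(2) that]) (use p_lim x0 in simp_all)
  moreover have "v' t \<noteq> 0" if "0 \<le> t" "t < tc + d" for t
    using that v_pos[of t] x_pos[of t] I by (auto simp: v'_def)
  moreover have "{s. 0 \<le> s \<and> ereal s < ereal (tc + d)} = {0..<tc+d}" by auto
  ultimately have "is_sol v' p' (ereal (tc + d))"
    using tc0 d unfolding is_sol_def rhs_v_def rhs_p_def by (simp add: zero_ereal_def)
  moreover have "\<forall>t. 0 \<le> t \<and> ereal t < b \<longrightarrow> v' t = v t \<and> p' t = p t"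
    using tc by (simp add: v'_def p'_def)
  moreover have "b < ereal (tc + d)" using tc d by simp
  ultimately show False using max unfolding is_max_sol_def by blast
qed

lemma p_tendsto_at_top:
  assumes max: "is_max_sol v p b" and tc: "b = ereal tc"
  shows "filterlim p at_top (at_left tc)"
proof -
  have I: "I = {0..<tc}" by (rule I_eq[OF tc])
  have unbounded: "\<exists>t\<in>I. B < p t" for B
  proof (rule ccontr)
    assume "\<not> (\<exists>t\<in>I. B < p t)"
    then have bound: "\<And>t. t \<in> I \<Longrightarrow> p t \<le> B" by (simp add: not_less)
    obtain K vb L where K: "0 < K" and v_lim: "(v \<longlongrightarrow> vb) (at_left tc)"
      and p_lim: "(p \<longlongrightarrow> L) (at_left tc)" and v_le: "\<And>t. t \<in> I \<Longrightarrow> v t \<le> vb + K * (tc - t)"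
      using bounded_solution_left_limits[OF tc bound] by blast
    have "eventually (\<lambda>t. t \<in> {0<..<tc}) (at_left tc)"
      using zero_in_I I by (intro eventually_at_left_real) auto
    then have "eventually (\<lambda>t. 0 \<le> v t) (at_left tc)"
      by eventually_elim (use v_pos I in \<open>auto intro: less_imp_le\<close>)
    then have "0 \<le> vb" using v_lim by (intro tendsto_lowerbound) auto
    moreover have "vb \<noteq> 0"
    proof
      assume "vb = 0"
      with v_le v_lim show False by (intro left_limit_v_nonzero[OF tc bound K]) auto
    qed
    ultimately show False using no_extension_beyond[OF max tc _ v_lim p_lim] by simp
  qed
  show ?thesis unfolding filterlim_at_top
  proof
    fix B
    obtain t0 where t0: "t0 \<in> I" "B < p t0" using unbounded by blast
    have "eventually (\<lambda>s. s \<in> {t0<..<tc}) (at_left tc)"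
      using t0 I by (intro eventually_at_left_real) auto
    then show "eventually (\<lambda>s. B \<le> p s) (at_left tc)"
      by eventually_elim (use t0 I p_mono[OF t0(1)] in force)
  qed
qed

end

theorem theorem3p9:
  fixes v p :: "real \<Rightarrow> real" and b :: ereal
  assumes "is_max_sol v p b"
    and "(v 0, p 0) \<in> Omega_b"
  defines "D \<equiv> p 0 / (lam * p 0 + mu)"
  shows "(\<forall>t. 0 < t \<and> ereal t < b \<longrightarrow>
            p t > mu * D * exp (mu * t) / (1 - lam * D * exp (mu * t)))
       \<and> (\<exists>tc. b = ereal tc \<and> 0 < tc \<and> tc < - ln (lam * D) / mu
            \<and> filterlim p at_top (at_left tc)
            \<and> filterlim (\<lambda>t. sqrt (2 * pi * (p t)^2 * (1 / v t + v t))) at_top (at_left tc)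
            \<and> filterlim (\<lambda>t. 2 * \<bar>p t\<bar> * max (1 / v t) (v t)) at_top (at_left tc))"
proof -
  interpret sol: pole_solution v p b
    using assms(1,2) by unfold_locales (simp add: is_max_sol_def)
  have D: "sol.D = D" by (simp add: sol.D_def D_def)
  obtain tc where tc: "b = ereal tc" "0 < tc" "tc < - ln (lam * D) / mu"
    using sol.existence_time_bound unfolding D by blast
  have p_lim: "filterlim p at_top (at_left tc)" by (rule sol.p_tendsto_at_top[OF assms(1) tc(1)])
  have "eventually (\<lambda>t. t \<in> {0<..<tc}) (at_left tc)" by (rule eventually_at_left_real[OF tc(2)])
  then have v_pos: "eventually (\<lambda>t. 0 < v t) (at_left tc)"
    by eventually_elim (auto intro: sol.v_pos simp: sol.I_eq[OF tc(1)])
  have "filterlim (\<lambda>t. sqrt (2 * pi * (p t)^2 * (1 / v t + v t))) at_top (at_left tc)"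
    using v_pos by (intro filterlim_at_top_mono[OF p_lim]) (auto elim: eventually_mono intro: p_le_N2)
  moreover have "filterlim (\<lambda>t. 2 * \<bar>p t\<bar> * max (1 / v t) (v t)) at_top (at_left tc)"
    using v_pos by (intro filterlim_at_top_mono[OF p_lim]) (auto elim: eventually_mono intro: p_le_N0)
  moreover have "\<forall>t. 0 < t \<and> ereal t < b \<longrightarrow> p t > mu * D * exp (mu * t) / (1 - lam * D * exp (mu * t))"
    using sol.p_lower_bound unfolding D sol.I_def by auto
  ultimately show ?thesis using tc p_lim by blast
qed

end
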